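(* Consider the following model. A principal P and an agent A interact over two periods $t\in\{1,2\}$. States $\omega_t\in\{0,1\}$ satisfy $\Pr[\omega_1=1]=\mu_0\in(0,1)$ and $\Pr[\omega_2=\omega\mid\omega_1=\omega]=\rho\in(1/2,1)$; neither player observes states directly. In each period A chooses $e_t\in\{0,1\}$; if $e_t=1$ he observes $\omega_t$, if $e_t=0$ he observes $\omega_t$ with probability $\pi\in(0,1)$ and nothing otherwise. A then reports $r_t\in\{\varnothing,\omega_t\}$ if he observed $\omega_t$ and $r_t=\varnothing$ otherwise. At the end of period 2, P chooses $x$. Payoffs: P gets $\mathbb{1}[x=\omega_2]-k(e_1+e_2)$, A gets $x-c(e_1+e_2)$, $c,k>0$. Let $\kappa=k/(1-\pi)$, $\gamma=c/(1-\pi)$, $\mu_2(\varnothing)=\rho\mu_0+(1-\rho)(1-\mu_0)$, and assume $$\kappa\in(1-\rho,\min\{\mu_2(\varnothing),1-\mu_2(\varnothing)\}],\qquad \gamma\in(1-\rho,\mu_2(\varnothing)].$$ Consider the mechanism $m^*$ with $\sigma_1=0$, $\sigma_2(r_1)=\mathbb{1}[r_1=\varnothing]$, and $\hat x(r_1,1)=1$, $\hat x(r_1,0)=0$ for all $r_1$, $\hat x(1,\varnothing)=1$, $\hat x(0,\varnothing)=0$, $\hat x(\varnothing,\varnothing)=0$. Consider A's deviation strategy: test in period 1; report $r_1=1$ if $\omega_1=1$ and $r_1=\varnothing$ otherwise; never test in period 2; in period 2 report $r_2=1$ if $\omega_2=1$ is observed and $r_2=\varnothing$ otherwise. Then this deviation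 gives A a strictly higher expected payoff than his best strategy among those that do not test in period 1 if and only if $$\gamma<\bar\gamma:=\frac{(1-\rho)[\mu_0-(1-\mu_0)(1-\pi)]}{\pi}.$$
   Context: The mechanism $m^*$ is the baseline (first-best, efficient-assignment) mechanism for this range of $\kappa$, modified so that no report after a requested test yields assignment $0$. The principal commits to the mechanism; A best-responds to it. *)

theory Defs
  imports Complex_Main
begin

text \<open>States are booleans (True = 1, False = 0). An observation or a report is a
  bool option: None = nothing observed / empty report, Some w = state w observed / reported.\<close>

type_synonym obs = "bool option"
type_synonym report = "bool option"

text \<open>A pure strategy of the agent:
  e1 (test in period 1?), r1 (period-1 report as function of the period-1 observation),
  e2 (test in period 2?, as function of the period-1 observation, which determines r1),
  r2 (period-2 report as function of both observations).\<close>
type_synonym strategy =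
  "bool \<times> (obs \<Rightarrow> report) \<times> (obs \<Rightarrow> bool) \<times> (obs \<Rightarrow> obs \<Rightarrow> report)"

definition feasible_report :: "obs \<Rightarrow> report \<Rightarrow> bool" where
  "feasible_report ob r \<longleftrightarrow> r = None \<or> r = ob"

definition feasible_strategy :: "strategy \<Rightarrow> bool" where
  "feasible_strategy s = (case s of (e1, r1, e2, r2) \<Rightarrow>
     (\<forall>o1. feasible_report o1 (r1 o1)) \<and> (\<forall>o1 o2. feasible_report o2 (r2 o1 o2)))"

definition prior :: "real \<Rightarrow> bool \<Rightarrow> real" where
  "prior \<mu>0 w = (if w then \<mu>0 else 1 - \<mu>0)"

definition trans_prob :: "real \<Rightarrow> bool \<Rightarrow> bool \<Rightarrow> real" where
  "trans_prob \<rho> w w' = (if w' = w then \<rho> else 1 - \<rho>)"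

definition obs_prob :: "real \<Rightarrow> bool \<Rightarrow> bool \<Rightarrow> obs \<Rightarrow> real" where
  "obs_prob \<pi> e w ob =
     (if ob = Some w then (if e then 1 else \<pi>)
      else if ob = None then (if e then 0 else 1 - \<pi>) else 0)"

definition xhat :: "report \<Rightarrow> report \<Rightarrow> real" where
  "xhat r1 r2 = (case r2 of Some b \<Rightarrow> of_bool b
                 | None \<Rightarrow> (case r1 of Some b \<Rightarrow> of_bool b | None \<Rightarrow> 0))"

definition all_obs :: "obs set" where
  "all_obs = {None, Some False, Some True}"

definition agent_payoff :: "real \<Rightarrow> real \<Rightarrow> real \<Rightarrow> real \<Rightarrow> strategy \<Rightarrow> real" where
  "agent_payoff \<mu>0 \<rho> \<pi> c s = (case s of (e1, r1, e2, r2) \<Rightarrow>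
     (\<Sum>w1\<in>(UNIV::bool set). \<Sum>w2\<in>(UNIV::bool set). \<Sum>o1\<in>all_obs. \<Sum>o2\<in>all_obs.
        prior \<mu>0 w1 * trans_prob \<rho> w1 w2 * obs_prob \<pi> e1 w1 o1 * obs_prob \<pi> (e2 o1) w2 o2 *
        (xhat (r1 o1) (r2 o1 o2) - c * (of_bool e1 + of_bool (e2 o1)))))"

definition deviation :: strategy where
  "deviation = (True,
                (\<lambda>ob. if ob = Some True then Some True else None),
                (\<lambda>_. False),
                (\<lambda>_ o2. if o2 = Some True then Some True else None))"

end

theory Submission
  imports Defs
begin

text \<open>Without a period-1 test, the agent's payoff splits according to what he saw in period 1.
  Having seen nothing, testing in period 2 and reporting \<open>\<omega>\<^sub>2 = 1\<close> is optimal because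
  \<open>\<gamma> \<le> \<mu>\<^sub>2(\<emptyset>)\<close>; having seen \<open>\<omega>\<^sub>1 = 0\<close>, a test is not worth its cost because \<open>\<gamma> > 1 - \<rho>\<close>,
  so he only gains when he sees \<open>\<omega>\<^sub>2 = 1\<close> by chance; having seen \<open>\<omega>\<^sub>1 = 1\<close>, reporting it
  already secures \<open>x = 1\<close>. This makes the best strategy without a period-1 test explicit, and
  the deviation beats it by \<open>(1 - \<pi>)(1 - \<rho>)(\<mu>\<^sub>0 - (1 - \<mu>\<^sub>0)(1 - \<pi>)) - \<pi> c\<close>, which is positive
  exactly when \<open>\<gamma> < \<gamma>bar\<close>.\<close>

definition continuation_payoff ::
  "real \<Rightarrow> real \<Rightarrow> real \<Rightarrow> real \<Rightarrow> obs \<Rightarrow> report \<Rightarrow> bool \<Rightarrow> (obs \<Rightarrow> report) \<Rightarrow> real" where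
  "continuation_payoff \<mu>0 \<rho> \<pi> c o1 a e R =
    (\<Sum>w1\<in>(UNIV::bool set). \<Sum>w2\<in>(UNIV::bool set). \<Sum>o2\<in>all_obs.
      prior \<mu>0 w1 * trans_prob \<rho> w1 w2 * obs_prob \<pi> False w1 o1 * obs_prob \<pi> e w2 o2 *
      (xhat a (R o2) - c * of_bool e))"

lemma agent_payoff_no_first_test:
  "agent_payoff \<mu>0 \<rho> \<pi> c (False, r1, e2, r2) =
     (\<Sum>o1\<in>all_obs. continuation_payoff \<mu>0 \<rho> \<pi> c o1 (r1 o1) (e2 o1) (r2 o1))"
  unfolding agent_payoff_def continuation_payoff_def
  by (simp add: all_obs_def sum.distrib)

lemma feasible_report_Some:
  "feasible_report ob r \<Longrightarrow> ob = Some w \<Longrightarrow> r = None \<or> r = Some w"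
  by (auto simp: feasible_report_def)

lemma xhat_le_one: "xhat r1 r2 \<le> 1"
  by (simp add: xhat_def split: option.split)

lemma continuation_payoff_le_obs_prob:
  assumes "0 \<le> \<mu>0" "\<mu>0 \<le> 1" "0 \<le> \<rho>" "\<rho> \<le> 1" "0 \<le> \<pi>" "\<pi> \<le> 1" "0 \<le> c"
  shows "continuation_payoff \<mu>0 \<rho> \<pi> c o1 a e R
           \<le> (\<Sum>w1\<in>UNIV. prior \<mu>0 w1 * obs_prob \<pi> False w1 o1)"
proof -
  have weights:
    "0 \<le> prior \<mu>0 w1 * trans_prob \<rho> w1 w2 * obs_prob \<pi> False w1 o1 * obs_prob \<pi> e w2 o2"
    for w1 w2 o2 using assms by (simp add: prior_def trans_prob_def obs_prob_def)
  have payoff_le_one: "xhat a r - c * of_bool e \<le> 1" for r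
    using xhat_le_one[of a r] assms(7) by simp
  have "continuation_payoff \<mu>0 \<rho> \<pi> c o1 a e R
          \<le> (\<Sum>w1\<in>UNIV. \<Sum>w2\<in>UNIV. \<Sum>o2\<in>all_obs.
                prior \<mu>0 w1 * trans_prob \<rho> w1 w2 * obs_prob \<pi> False w1 o1 * obs_prob \<pi> e w2 o2)"
    unfolding continuation_payoff_def by (intro sum_mono mult_left_le weights payoff_le_one)
  also have "\<dots> = (\<Sum>w1\<in>UNIV. prior \<mu>0 w1 * obs_prob \<pi> False w1 o1)"
    by (simp add: UNIV_bool all_obs_def trans_prob_def obs_prob_def algebra_simps)
  finally show ?thesis .
qed

lemma continuation_payoff_saw_one_le:
  assumes "0 \<le> \<mu>0" "\<mu>0 \<le> 1" "0 \<le> \<rho>" "\<rho> \<le> 1" "0 \<le> \<pi>" "\<pi> \<le> 1" "0 \<le> c"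
  shows "continuation_payoff \<mu>0 \<rho> \<pi> c (Some True) a e R \<le> \<mu>0 * \<pi>"
  using continuation_payoff_le_obs_prob[OF assms, of "Some True" a e R]
  by (simp add: UNIV_bool prior_def obs_prob_def)

lemma continuation_payoff_uninformed_le:
  assumes "feasible_report None a" "\<forall>o2. feasible_report o2 (R o2)"
    and "0 \<le> \<mu>0" "\<mu>0 \<le> 1" "0 \<le> \<rho>" "\<rho> \<le> 1" "0 \<le> \<pi>" "\<pi> \<le> 1"
    and "c \<le> (1 - \<pi>) * (\<rho> * \<mu>0 + (1 - \<rho>) * (1 - \<mu>0))"
  shows "continuation_payoff \<mu>0 \<rho> \<pi> c None a e R
           \<le> (1 - \<pi>) * (\<rho> * \<mu>0 + (1 - \<rho>) * (1 - \<mu>0) - c)"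
proof -
  let ?\<mu>2 = "\<rho> * \<mu>0 + (1 - \<rho>) * (1 - \<mu>0)"
  have \<mu>2: "0 \<le> ?\<mu>2" and \<pi>: "0 \<le> 1 - \<pi>"
    using assms(3-8) by simp_all
  have c: "\<pi> * ?\<mu>2 \<le> ?\<mu>2 - c"
    using assms(9) by (simp add: algebra_simps)
  have "0 \<le> (1 - \<pi>) * ?\<mu>2"
    using \<mu>2 \<pi> by simp
  moreover have "(1 - \<pi>) * (\<pi> * ?\<mu>2) \<le> (1 - \<pi>) * (?\<mu>2 - c)"
    using c \<pi> by (rule mult_left_mono)
  moreover have "0 \<le> (1 - \<pi>) * (\<pi> * ?\<mu>2)"
    using \<mu>2 \<pi> assms(7) by simp
  moreover have "a = None" "R None = None"
    using assms(1,2) by (auto simp: feasible_report_def)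
  moreover have "R (Some False) = None \<or> R (Some False) = Some False"
    and "R (Some True) = None \<or> R (Some True) = Some True"
    using assms(2) feasible_report_Some by blast+
  ultimately show ?thesis
    unfolding continuation_payoff_def all_obs_def
    by (cases e; elim disjE;
        simp add: UNIV_bool prior_def trans_prob_def obs_prob_def xhat_def algebra_simps)
qed


lemma continuation_payoff_saw_zero_le:
  assumes "feasible_report (Some False) a" "\<forall>o2. feasible_report o2 (R o2)"
    and "0 \<le> \<mu>0" "\<mu>0 \<le> 1" "0 \<le> \<rho>" "\<rho> \<le> 1" "0 \<le> \<pi>" "\<pi> \<le> 1"
    and "(1 - \<rho>) * (1 - \<pi>) \<le> c"
  shows "continuation_payoff \<mu>0 \<rho> \<pi> c (Some False) a e R
           \<le> (1 - \<mu>0) * \<pi> * (\<pi> * (1 - \<rho>))"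
proof -
  let ?F = "(1 - \<mu>0) * \<pi>"
  have F: "0 \<le> ?F" and c: "0 \<le> c" and \<pi>: "0 \<le> \<pi> * (1 - \<rho>)"
    using assms(3-9) by (simp_all add: order_trans[OF _ assms(9)])
  have "0 \<le> ?F * c" "0 \<le> ?F * (\<pi> * (1 - \<rho>))"
    using F c \<pi> by simp_all
  moreover have "?F * ((1 - \<rho>) - c) \<le> ?F * (\<pi> * (1 - \<rho>))"
    using assms(9) F by (intro mult_left_mono) (simp_all add: algebra_simps)
  moreover have "a = None \<or> a = Some False" "R None = None"
    using assms(1,2) by (auto simp: feasible_report_def)
  moreover have "R (Some False) = None \<or> R (Some False) = Some False"
    and "R (Some True) = None \<or> R (Some True) = Some True"
    using assms(2) feasible_report_Some by blast+
  ultimately show ?thesis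
    unfolding continuation_payoff_def all_obs_def
    by (cases e; elim disjE;
        simp add: UNIV_bool prior_def trans_prob_def obs_prob_def xhat_def algebra_simps)
qed

definition best_without_first_test :: strategy where
  "best_without_first_test = (False,
     (\<lambda>ob. if ob = Some True then Some True else None),
     (\<lambda>ob. ob = None),
     (\<lambda>_ o2. if o2 = Some True then Some True else None))"

lemma best_without_first_test_feasible:
  "feasible_strategy best_without_first_test" "\<not> fst best_without_first_test"
  by (auto simp: best_without_first_test_def feasible_strategy_def feasible_report_def)

lemma agent_payoff_best_without_first_test:
  "agent_payoff \<mu>0 \<rho> \<pi> c best_without_first_test =
     \<mu>0 * \<pi> + (1 - \<mu>0) * \<pi> * (\<pi> * (1 - \<rho>)) + (1 - \<pi>) * (\<rho> * \<mu>0 + (1 - \<rho>) * (1 - \<mu>0) - c)"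
  unfolding agent_payoff_def best_without_first_test_def all_obs_def
  by (simp add: UNIV_bool prior_def trans_prob_def obs_prob_def xhat_def algebra_simps)

lemma agent_payoff_le_best_without_first_test:
  assumes "feasible_strategy s" "\<not> fst s"
    and "0 \<le> \<mu>0" "\<mu>0 \<le> 1" "0 \<le> \<rho>" "\<rho> \<le> 1" "0 \<le> \<pi>" "\<pi> \<le> 1"
    and "(1 - \<rho>) * (1 - \<pi>) \<le> c" "c \<le> (1 - \<pi>) * (\<rho> * \<mu>0 + (1 - \<rho>) * (1 - \<mu>0))"
  shows "agent_payoff \<mu>0 \<rho> \<pi> c s \<le> agent_payoff \<mu>0 \<rho> \<pi> c best_without_first_test"
proof -
  obtain r1 e2 r2 where s: "s = (False, r1, e2, r2)"
    using assms(2) by (cases s) auto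
  have r1: "\<forall>o1. feasible_report o1 (r1 o1)"
    and r2: "\<forall>o1 o2. feasible_report o2 (r2 o1 o2)"
    using assms(1) by (simp_all add: s feasible_strategy_def)
  have c: "0 \<le> c"
    using assms(6,8,9) mult_nonneg_nonneg[of "1 - \<rho>" "1 - \<pi>"] by linarith
  have "continuation_payoff \<mu>0 \<rho> \<pi> c None (r1 None) (e2 None) (r2 None)
          \<le> (1 - \<pi>) * (\<rho> * \<mu>0 + (1 - \<rho>) * (1 - \<mu>0) - c)"
    using r1 r2 assms(3-8,10) by (intro continuation_payoff_uninformed_le) auto
  moreover have "continuation_payoff \<mu>0 \<rho> \<pi> c (Some False)
                   (r1 (Some False)) (e2 (Some False)) (r2 (Some False))
          \<le> (1 - \<mu>0) * \<pi> * (\<pi> * (1 - \<rho>))"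
    using r1 r2 assms(3-9) by (intro continuation_payoff_saw_zero_le) auto
  moreover have "continuation_payoff \<mu>0 \<rho> \<pi> c (Some True)
                   (r1 (Some True)) (e2 (Some True)) (r2 (Some True))
          \<le> \<mu>0 * \<pi>"
    using assms(3-8) c by (rule continuation_payoff_saw_one_le)
  ultimately show ?thesis
    by (simp add: s agent_payoff_no_first_test agent_payoff_best_without_first_test all_obs_def)
qed

lemma deviation_gain:
  "agent_payoff \<mu>0 \<rho> \<pi> c deviation - agent_payoff \<mu>0 \<rho> \<pi> c best_without_first_test =
     (1 - \<pi>) * ((1 - \<rho>) * (\<mu>0 - (1 - \<mu>0) * (1 - \<pi>))) - \<pi> * c"
  unfolding agent_payoff_best_without_first_test
  unfolding agent_payoff_def deviation_def all_obs_def
  by (simp add: UNIV_bool prior_def trans_prob_def obs_prob_def xhat_def algebra_simps)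

theorem proposition2:
  fixes \<mu>0 \<rho> \<pi> c k :: real
  assumes "0 < \<mu>0" "\<mu>0 < 1"
    and "1/2 < \<rho>" "\<rho> < 1"
    and "0 < \<pi>" "\<pi> < 1"
    and "0 < c" "0 < k"
    and "1 - \<rho> < k / (1 - \<pi>)"
    and "k / (1 - \<pi>) \<le> min (\<rho> * \<mu>0 + (1 - \<rho>) * (1 - \<mu>0)) (1 - (\<rho> * \<mu>0 + (1 - \<rho>) * (1 - \<mu>0)))"
    and "1 - \<rho> < c / (1 - \<pi>)"
    and "c / (1 - \<pi>) \<le> \<rho> * \<mu>0 + (1 - \<rho>) * (1 - \<mu>0)"
  shows "(\<forall>s. feasible_strategy s \<and> \<not> fst s \<longrightarrow>
            agent_payoff \<mu>0 \<rho> \<pi> c deviation > agent_payoff \<mu>0 \<rho> \<pi> c s)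
         \<longleftrightarrow> c / (1 - \<pi>) < (1 - \<rho>) * (\<mu>0 - (1 - \<mu>0) * (1 - \<pi>)) / \<pi>"
proof -
  let ?U = "agent_payoff \<mu>0 \<rho> \<pi> c"
  have \<pi>: "0 < 1 - \<pi>" "0 < \<pi>"
    using assms(5,6) by simp_all
  have "(1 - \<rho>) * (1 - \<pi>) \<le> c"
    using assms(11) \<pi> by (simp add: pos_less_divide_eq)
  moreover have "c \<le> (1 - \<pi>) * (\<rho> * \<mu>0 + (1 - \<rho>) * (1 - \<mu>0))"
    using assms(12) \<pi> by (simp add: pos_divide_le_eq mult.commute)
  ultimately have best: "?U s \<le> ?U best_without_first_test" if "feasible_strategy s" "\<not> fst s" for s
    using that assms(1-6) by (intro agent_payoff_le_best_without_first_test) auto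
  have "(\<forall>s. feasible_strategy s \<and> \<not> fst s \<longrightarrow> ?U deviation > ?U s) \<longleftrightarrow>
        ?U best_without_first_test < ?U deviation"
    using best best_without_first_test_feasible by (meson le_less_trans)
  also have "\<dots> \<longleftrightarrow> \<pi> * c < (1 - \<pi>) * ((1 - \<rho>) * (\<mu>0 - (1 - \<mu>0) * (1 - \<pi>)))"
    using deviation_gain[of \<mu>0 \<rho> \<pi> c] by linarith
  also have "\<dots> \<longleftrightarrow> c / (1 - \<pi>) < (1 - \<rho>) * (\<mu>0 - (1 - \<mu>0) * (1 - \<pi>)) / \<pi>"
    using \<pi> by (simp add: divide_less_eq less_divide_eq field_simps)
  finally show ?thesis .
qed

end
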